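(* Let $L>0$, $M\ge1$ an integer, $\Delta x=L/M$, and cells $C_j=[x_{j-\frac12},x_{j+\frac12}]$ with centers $x_j=j\Delta x$, $j\in\{-M,\dots,M\}$. Let $H\in C^1([0,\infty))$, $V:\mathbb{R}\to\mathbb{R}$, and let $(W_k)_{k=-2M}^{2M}$ be real numbers with $W_{-k}=W_k$ for all $k$. Let $t\mapsto(\overline\rho_j(t))_{j=-M}^M$ be a differentiable solution on $(0,\infty)$, with $\overline\rho_j(t)\ge0$, of the ODE system \[ \frac{d\overline\rho_j}{dt}=-\frac{F_{j+\frac12}-F_{j-\frac12}}{\Delta x},\qquad j=-M,\dots,M, \] where at each time: slopes $(\rho_x)_j$ are chosen so that the point values $\rho_j^{\rm E}=\overline\rho_j+\frac{\Delta x}{2}(\rho_x)_j$ and $\rho_j^{\rm W}=\overline\rho_j-\frac{\Delta x}{2}(\rho_x)_j$ are nonnegative; $\xi_j=\Delta x\sum_{i=-M}^{M}W_{j-i}\overline\rho_i+H'(\overline\rho_j)+V(x_j)$; $u_{j+\frac12}=-\frac{\xi_{j+1}-\xi_j}{\Delta x}$, $u^\pm_{j+\frac12}$ its positive part $\max(u_{j+\frac12},0)$ and negative part $\min(u_{j+\frac12},0)$; $F_{j+\frac12}=u_{j+\frac12}^+\rho_j^{\rm E}+u_{j+\frac12}^-\rho_{j+1}^{\rm W}$ for $j=-M,\dots,M-1$; and $F_{-M-\frac12}=F_{M+\frac12}=0$. Define the discrete entropy and entropy dissipation \[ E_\Delta(t)=\Delta x\sum_{j=-M}^{M}\Big[\tfrac12\Delta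 x\sum_{i=-M}^{M}W_{j-i}\overline\rho_i\overline\rho_j+H(\overline\rho_j)+V(x_j)\overline\rho_j\Big],\qquad I_\Delta(t)=\Delta x\sum_{j=-M}^{M-1}\big(u_{j+\frac12}\big)^2\min\big(\rho_j^{\rm E},\rho_{j+1}^{\rm W}\big). \] Then $\frac{d}{dt}E_\Delta(t)\le -I_\Delta(t)$ for all $t>0$.
   Context: This is the one-dimensional semi-discrete finite-volume scheme with no-flux boundary conditions for $\rho_t=\partial_x\big[\rho\,\partial_x\big(H'(\rho)+V(x)+W*\rho\big)\big]$ on $[-L,L]$ with symmetric interaction potential $W$ and $\rho_0\ge0$; $W_{j-i}$ approximates $W(x_j-x_i)$ (e.g. $W_{j-i}=W(x_j-x_i)$), so the symmetry $W_{-k}=W_k$ reflects the symmetry of $W$. $E_\Delta$ is a discrete version of the free energy $E(\rho)=\int H(\rho)+\int V\rho+\frac12\iint W(x-y)\rho(x)\rho(y)$. *)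

theory Defs
  imports "HOL-Analysis.Analysis"
begin

text \<open>Semi-discrete finite-volume scheme. Cell indices j range over the integers
  -M..M; rho j is the cell average, rx j the slope, dx the mesh size.
  The flux F j stands for F at the interface j+1/2.\<close>

definition pt_E :: "real \<Rightarrow> (int \<Rightarrow> real) \<Rightarrow> (int \<Rightarrow> real) \<Rightarrow> int \<Rightarrow> real" where
  "pt_E dx rho rx j = rho j + dx / 2 * rx j"

definition pt_W :: "real \<Rightarrow> (int \<Rightarrow> real) \<Rightarrow> (int \<Rightarrow> real) \<Rightarrow> int \<Rightarrow> real" where
  "pt_W dx rho rx j = rho j - dx / 2 * rx j"

definition xi :: "nat \<Rightarrow> real \<Rightarrow> (int \<Rightarrow> real) \<Rightarrow> (real \<Rightarrow> real) \<Rightarrow> (real \<Rightarrow> real)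
    \<Rightarrow> (int \<Rightarrow> real) \<Rightarrow> int \<Rightarrow> real" where
  "xi M dx W Hp V rho j =
     dx * (\<Sum>i = - int M..int M. W (j - i) * rho i) + Hp (rho j) + V (real_of_int j * dx)"

definition vel :: "nat \<Rightarrow> real \<Rightarrow> (int \<Rightarrow> real) \<Rightarrow> (real \<Rightarrow> real) \<Rightarrow> (real \<Rightarrow> real)
    \<Rightarrow> (int \<Rightarrow> real) \<Rightarrow> int \<Rightarrow> real" where
  "vel M dx W Hp V rho j = - (xi M dx W Hp V rho (j + 1) - xi M dx W Hp V rho j) / dx"

definition flux :: "nat \<Rightarrow> real \<Rightarrow> (int \<Rightarrow> real) \<Rightarrow> (real \<Rightarrow> real) \<Rightarrow> (real \<Rightarrow> real)
    \<Rightarrow> (int \<Rightarrow> real) \<Rightarrow> (int \<Rightarrow> real) \<Rightarrow> int \<Rightarrow> real" where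
  "flux M dx W Hp V rho rx j =
     (if - int M \<le> j \<and> j \<le> int M - 1 then
        max (vel M dx W Hp V rho j) 0 * pt_E dx rho rx j
        + min (vel M dx W Hp V rho j) 0 * pt_W dx rho rx (j + 1)
      else 0)"

definition entropy :: "nat \<Rightarrow> real \<Rightarrow> (int \<Rightarrow> real) \<Rightarrow> (real \<Rightarrow> real) \<Rightarrow> (real \<Rightarrow> real)
    \<Rightarrow> (int \<Rightarrow> real) \<Rightarrow> real" where
  "entropy M dx W H V rho =
     dx * (\<Sum>j = - int M..int M.
        1/2 * dx * (\<Sum>i = - int M..int M. W (j - i) * rho i * rho j)
        + H (rho j) + V (real_of_int j * dx) * rho j)"

definition dissipation :: "nat \<Rightarrow> real \<Rightarrow> (int \<Rightarrow> real) \<Rightarrow> (real \<Rightarrow> real) \<Rightarrow> (real \<Rightarrow> real)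
    \<Rightarrow> (int \<Rightarrow> real) \<Rightarrow> (int \<Rightarrow> real) \<Rightarrow> real" where
  "dissipation M dx W Hp V rho rx =
     dx * (\<Sum>j = - int M..int M - 1.
        (vel M dx W Hp V rho j)\<^sup>2 * min (pt_E dx rho rx j) (pt_W dx rho rx (j + 1)))"

end

theory Submission
  imports Defs
begin

text \<open>Differentiating the entropy and using the symmetry of W gives
  dE/dt = dx * sum_j xi_j * d rho_j/dt. Inserting the scheme and summing by parts
  (the boundary fluxes vanish) turns this into - dx * sum_j u_(j+1/2) * F_(j+1/2),
  and the upwind flux satisfies u F \<ge> u^2 min(rho^E_j, rho^W_(j+1)) because it picks,
  according to the sign of u, one of these two nonnegative point values.\<close>

lemma DERIV_comp_nonneg_within:
  fixes f H Hp :: "real \<Rightarrow> real"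
  assumes "open U" "t \<in> U" "f ` U \<subseteq> {0..}"
    and f_deriv: "(f has_real_derivative f') (at t)"
    and H_deriv: "\<And>s. s \<ge> 0 \<Longrightarrow> (H has_real_derivative Hp s) (at s within {0..})"
  shows "((\<lambda>s. H (f s)) has_real_derivative Hp (f t) * f') (at t)"
proof -
  have at_U: "at t within U = at t"
    using assms(2,1) by (rule at_within_open)
  have "(H has_real_derivative Hp (f t)) (at (f t) within f ` U)"
    using has_field_derivative_subset[OF H_deriv assms(3)] assms(2,3) by auto
  moreover have "(f has_real_derivative f') (at t within U)"
    using f_deriv by (simp add: at_U)
  ultimately have "(H \<circ> f has_real_derivative Hp (f t) * f') (at t within U)"
    by (rule DERIV_image_chain)
  then show ?thesis by (simp add: at_U o_def)
qed

lemma double_sum_symmetric_kernel: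
  fixes W :: "int \<Rightarrow> real"
  assumes "\<And>i j. i \<in> S \<Longrightarrow> j \<in> S \<Longrightarrow> W (i - j) = W (j - i)"
  shows "(\<Sum>j\<in>S. \<Sum>i\<in>S. W (j - i) * (a i * b j)) = (\<Sum>j\<in>S. \<Sum>i\<in>S. W (j - i) * (b i * a j))"
proof -
  have "(\<Sum>j\<in>S. \<Sum>i\<in>S. W (j - i) * (a i * b j)) = (\<Sum>i\<in>S. \<Sum>j\<in>S. W (j - i) * (a i * b j))"
    by (rule sum.swap)
  also have "\<dots> = (\<Sum>i\<in>S. \<Sum>j\<in>S. W (i - j) * (b j * a i))"
    using assms by (intro sum.cong refl) (simp add: mult_ac)
  finally show ?thesis .
qed

lemma entropy_has_real_derivative:
  fixes rho :: "real \<Rightarrow> int \<Rightarrow> real"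
  assumes W_sym: "\<And>i j. i \<in> {- int M..int M} \<Longrightarrow> j \<in> {- int M..int M} \<Longrightarrow> W (i - j) = W (j - i)"
    and rho_deriv: "\<And>j. j \<in> {- int M..int M} \<Longrightarrow> ((\<lambda>s. rho s j) has_real_derivative d j) (at t)"
    and H_rho_deriv: "\<And>j. j \<in> {- int M..int M} \<Longrightarrow>
       ((\<lambda>s. H (rho s j)) has_real_derivative Hp (rho t j) * d j) (at t)"
  shows "((\<lambda>s. entropy M dx W H V (rho s)) has_real_derivative
           dx * (\<Sum>j = - int M..int M. xi M dx W Hp V (rho t) j * d j)) (at t)"
proof -
  define S where "S = {- int M..int M}"
  define r where "r = rho t"
  define D where "D = dx * (\<Sum>j\<in>S. 1/2 * dx * (\<Sum>i\<in>S. W (j - i) * (d i * r j + r i * d j))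
        + Hp (r j) * d j + V (real_of_int j * dx) * d j)"
  have "((\<lambda>s. entropy M dx W H V (rho s)) has_real_derivative D) (at t)"
    unfolding entropy_def D_def S_def[symmetric]
    using rho_deriv H_rho_deriv unfolding S_def
    by (intro DERIV_cmult DERIV_sum DERIV_add DERIV_mult)
       (auto intro!: derivative_eq_intros simp: r_def algebra_simps)
  moreover have "D = dx * (\<Sum>j\<in>S. xi M dx W Hp V r j * d j)"
  proof -
    have "D = dx * (1/2 * dx * (\<Sum>j\<in>S. \<Sum>i\<in>S. W (j - i) * (d i * r j))
        + 1/2 * dx * (\<Sum>j\<in>S. \<Sum>i\<in>S. W (j - i) * (r i * d j))
        + (\<Sum>j\<in>S. Hp (r j) * d j + V (real_of_int j * dx) * d j))"
      unfolding D_def by (simp add: algebra_simps sum.distrib sum_distrib_left)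
    also have "\<dots> = dx * (dx * (\<Sum>j\<in>S. \<Sum>i\<in>S. W (j - i) * (r i * d j))
        + (\<Sum>j\<in>S. Hp (r j) * d j + V (real_of_int j * dx) * d j))"
      using double_sum_symmetric_kernel[of S W d r] W_sym unfolding S_def
      by (simp add: algebra_simps)
    also have "\<dots> = dx * (\<Sum>j\<in>S. xi M dx W Hp V r j * d j)"
      unfolding xi_def S_def
      by (simp add: algebra_simps sum.distrib sum_distrib_left sum_distrib_right)
    finally show ?thesis .
  qed
  ultimately show ?thesis by (simp add: S_def r_def)
qed

lemma sum_by_parts_zero_boundary:
  fixes x F :: "int \<Rightarrow> real"
  assumes "a \<le> b" "F (a - 1) = 0" "F b = 0"
  shows "(\<Sum>j = a..b. x j * (F j - F (j - 1))) = (\<Sum>j = a..b - 1. (x j - x (j + 1)) * F j)"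
proof -
  have top: "(\<Sum>j = a..b. x j * F j) = (\<Sum>j = a..b - 1. x j * F j)"
  proof -
    have "{a..b} = insert b {a..b - 1}" using assms(1) by auto
    then show ?thesis using assms(3) by simp
  qed
  have "(\<Sum>j = a..b. x j * F (j - 1)) = (\<Sum>j = a - 1..b - 1. x (j + 1) * F j)"
    by (rule sum.reindex_bij_witness[of _ "\<lambda>j. j + 1" "\<lambda>j. j - 1"]) auto
  also have "\<dots> = (\<Sum>j = a..b - 1. x (j + 1) * F j)"
  proof -
    have "{a - 1..b - 1} = insert (a - 1) {a..b - 1}" using assms(1) by auto
    then show ?thesis using assms(2) by simp
  qed
  finally have bot: "(\<Sum>j = a..b. x j * F (j - 1)) = (\<Sum>j = a..b - 1. x (j + 1) * F j)" .
  show ?thesis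
    by (simp add: right_diff_distrib left_diff_distrib sum_subtractf top bot)
qed

lemma upwind_flux_dissipation:
  fixes u e w :: real
  assumes "e \<ge> 0" "w \<ge> 0"
  shows "u\<^sup>2 * min e w \<le> u * (max u 0 * e + min u 0 * w)"
proof (cases "u \<ge> 0")
  case True
  then have "u\<^sup>2 * min e w \<le> u\<^sup>2 * e" by (intro mult_left_mono) auto
  with True show ?thesis by (simp add: power2_eq_square)
next
  case False
  then have "u\<^sup>2 * min e w \<le> u\<^sup>2 * w" by (intro mult_left_mono) auto
  with False show ?thesis by (simp add: power2_eq_square)
qed

lemma dissipation_le_velocity_flux:
  assumes "\<And>j. - int M \<le> j \<Longrightarrow> j \<le> int M \<Longrightarrow> pt_E dx rho rx j \<ge> 0"
    and "\<And>j. - int M \<le> j \<Longrightarrow> j \<le> int M \<Longrightarrow> pt_W dx rho rx j \<ge> 0"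
    and "dx \<ge> 0"
  shows "dissipation M dx W Hp V rho rx
           \<le> dx * (\<Sum>j = - int M..int M - 1. vel M dx W Hp V rho j * flux M dx W Hp V rho rx j)"
  unfolding dissipation_def
  using assms by (intro mult_left_mono sum_mono) (auto simp: flux_def intro: upwind_flux_dissipation)

lemma entropy_production_eq_velocity_flux:
  assumes "dx \<noteq> 0" "M \<ge> 1"
  shows "dx * (\<Sum>j = - int M..int M. xi M dx W Hp V rho j *
            (- (flux M dx W Hp V rho rx j - flux M dx W Hp V rho rx (j - 1)) / dx))
       = - dx * (\<Sum>j = - int M..int M - 1. vel M dx W Hp V rho j * flux M dx W Hp V rho rx j)"
  (is "dx * (\<Sum>j = _.._. ?x j * (- (?F j - ?F (j - 1)) / dx)) = _")
proof -
  have "dx * (\<Sum>j = - int M..int M. ?x j * (- (?F j - ?F (j - 1)) / dx))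
      = - (\<Sum>j = - int M..int M. ?x j * (?F j - ?F (j - 1)))"
    unfolding sum_distrib_left sum_negf[symmetric]
    using assms(1) by (intro sum.cong) (auto simp: field_simps)
  also have "\<dots> = - (\<Sum>j = - int M..int M - 1. (?x j - ?x (j + 1)) * ?F j)"
    using assms(2) by (subst sum_by_parts_zero_boundary) (auto simp: flux_def)
  also have "\<dots> = - dx * (\<Sum>j = - int M..int M - 1. vel M dx W Hp V rho j * ?F j)"
    using assms(1) by (simp add: vel_def sum_distrib_left sum_negf)
  finally show ?thesis .
qed

theorem theorem2p2:
  fixes L :: real and M :: nat and dx :: real
    and H Hp V :: "real \<Rightarrow> real" and W :: "int \<Rightarrow> real"
    and rho rx :: "real \<Rightarrow> int \<Rightarrow> real"
  assumes L_pos: "L > 0" and M_ge: "M \<ge> 1" and dx_def: "dx = L / real M"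
    and H_deriv: "\<And>s. s \<ge> 0 \<Longrightarrow> (H has_real_derivative Hp s) (at s within {0..})"
    and Hp_cont: "continuous_on {0..} Hp"
    and W_sym: "\<And>k. \<bar>k\<bar> \<le> 2 * int M \<Longrightarrow> W (- k) = W k"
    and rho_nonneg: "\<And>t j. t > 0 \<Longrightarrow> - int M \<le> j \<Longrightarrow> j \<le> int M \<Longrightarrow> rho t j \<ge> 0"
    and E_nonneg: "\<And>t j. t > 0 \<Longrightarrow> - int M \<le> j \<Longrightarrow> j \<le> int M \<Longrightarrow> pt_E dx (rho t) (rx t) j \<ge> 0"
    and W_nonneg: "\<And>t j. t > 0 \<Longrightarrow> - int M \<le> j \<Longrightarrow> j \<le> int M \<Longrightarrow> pt_W dx (rho t) (rx t) j \<ge> 0"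
    and ode: "\<And>t j. t > 0 \<Longrightarrow> - int M \<le> j \<Longrightarrow> j \<le> int M \<Longrightarrow>
       ((\<lambda>s. rho s j) has_real_derivative
          - (flux M dx W Hp V (rho t) (rx t) j - flux M dx W Hp V (rho t) (rx t) (j - 1)) / dx) (at t)"
  shows "\<forall>t > 0. \<exists>D. ((\<lambda>s. entropy M dx W H V (rho s)) has_real_derivative D) (at t)
            \<and> D \<le> - dissipation M dx W Hp V (rho t) (rx t)"
proof (intro allI impI)
  fix t :: real assume t: "t > 0"
  have dx_pos: "dx > 0" using L_pos M_ge dx_def by simp
  define d where "d j = - (flux M dx W Hp V (rho t) (rx t) j
                           - flux M dx W Hp V (rho t) (rx t) (j - 1)) / dx" for j
  have W_sym': "W (i - j) = W (j - i)" if "i \<in> {- int M..int M}" "j \<in> {- int M..int M}" for i j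
    using W_sym[of "j - i"] that by auto
  have rho_deriv: "((\<lambda>s. rho s j) has_real_derivative d j) (at t)" if "j \<in> {- int M..int M}" for j
    using ode t that unfolding d_def by auto
  have H_rho_deriv: "((\<lambda>s. H (rho s j)) has_real_derivative Hp (rho t j) * d j) (at t)"
    if "j \<in> {- int M..int M}" for j
    using that rho_nonneg t
    by (intro DERIV_comp_nonneg_within[where U = "{0<..}", OF _ _ _ rho_deriv H_deriv]) auto
  show "\<exists>D. ((\<lambda>s. entropy M dx W H V (rho s)) has_real_derivative D) (at t)
            \<and> D \<le> - dissipation M dx W Hp V (rho t) (rx t)"
  proof (intro exI conjI)
    show "((\<lambda>s. entropy M dx W H V (rho s)) has_real_derivative
           dx * (\<Sum>j = - int M..int M. xi M dx W Hp V (rho t) j * d j)) (at t)"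
      using W_sym' rho_deriv H_rho_deriv by (rule entropy_has_real_derivative)
    show "dx * (\<Sum>j = - int M..int M. xi M dx W Hp V (rho t) j * d j)
          \<le> - dissipation M dx W Hp V (rho t) (rx t)"
      unfolding d_def entropy_production_eq_velocity_flux[OF less_imp_neq[OF dx_pos, symmetric] M_ge]
      using dissipation_le_velocity_flux[of M dx "rho t" "rx t"] E_nonneg W_nonneg t dx_pos
      by auto
  qed
qed

end
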